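(* Let $G$ be a finite group and let $R(G)$ be its solvable radical. For $g\in G$, we have $g\notin R(G)$ if and only if there exist an integer $n\ge 1$ and elements $x_1,\dots,x_n\in G$ such that the subgroup $\langle [g,x_1],\dots,[g,x_n]\rangle$ is not solvable.
   Context: The commutator is $[x,y]=xyx^{-1}y^{-1}$. The solvable radical $R(G)$ is the largest solvable normal subgroup of $G$. *)

theory Defs
  imports "HOL-Algebra.Algebra"
begin

definition commutator :: "('a, 'b) monoid_scheme \<Rightarrow> 'a \<Rightarrow> 'a \<Rightarrow> 'a" where
  "commutator G x y = x \<otimes>\<^bsub>G\<^esub> y \<otimes>\<^bsub>G\<^esub> inv\<^bsub>G\<^esub> x \<otimes>\<^bsub>G\<^esub> inv\<^bsub>G\<^esub> y"

definition is_solvable_radical :: "('a, 'b) monoid_scheme \<Rightarrow> 'a set \<Rightarrow> bool" where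
  "is_solvable_radical G R \<longleftrightarrow>
     R \<lhd> G \<and> solvable (G\<lparr>carrier := R\<rparr>) \<and>
     (\<forall>N. N \<lhd> G \<and> solvable (G\<lparr>carrier := N\<rparr>) \<longrightarrow> N \<subseteq> R)"

end

theory Submission
  imports Defs
begin

(* If g lies in the radical, so do all commutators [g, x], and subgroups of solvable groups are
   solvable.  Conversely, the commutators [g, x] for all x generate a normal subgroup K; if K is
   solvable, then g lies in the preimage Z of the centre of G/K, which is normal with
   [Z, Z] \<subseteq> K and hence solvable, so g lies in the radical.  Finiteness of G is needed only
   to list all x as x_1, ..., x_n. *)

context group
begin

lemma inv_mult_cancel_left [simp]:
  "x \<in> carrier G \<Longrightarrow> y \<in> carrier G \<Longrightarrow> inv x \<otimes> (x \<otimes> y) = y"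
  by (simp add: m_assoc [symmetric])

lemma mult_inv_cancel_left [simp]:
  "x \<in> carrier G \<Longrightarrow> y \<in> carrier G \<Longrightarrow> x \<otimes> (inv x \<otimes> y) = y"
  by (simp add: m_assoc [symmetric])

lemma commutator_closed [simp]:
  "x \<in> carrier G \<Longrightarrow> y \<in> carrier G \<Longrightarrow> commutator G x y \<in> carrier G"
  by (simp add: commutator_def)

lemma conj_commutator_right:
  assumes "g \<in> carrier G" "x \<in> carrier G" "y \<in> carrier G"
  shows "x \<otimes> commutator G g y \<otimes> inv x = inv (commutator G g x) \<otimes> commutator G g (x \<otimes> y)"
  using assms by (simp add: commutator_def m_assoc inv_mult_group)

lemma commutator_mult_left:
  assumes "a \<in> carrier G" "b \<in> carrier G" "z \<in> carrier G"
  shows "commutator G (a \<otimes> b) z = a \<otimes> commutator G b z \<otimes> inv a \<otimes> commutator G a z"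
  using assms by (simp add: commutator_def m_assoc inv_mult_group)

lemma commutator_inv_left:
  assumes "a \<in> carrier G" "z \<in> carrier G"
  shows "commutator G (inv a) z = inv a \<otimes> inv (commutator G a z) \<otimes> a"
  using assms by (simp add: commutator_def m_assoc inv_mult_group)

lemma commutator_conj_left:
  assumes "x \<in> carrier G" "y \<in> carrier G" "z \<in> carrier G"
  shows "commutator G (x \<otimes> y \<otimes> inv x) z = x \<otimes> commutator G y (inv x \<otimes> z \<otimes> x) \<otimes> inv x"
  using assms by (simp add: commutator_def m_assoc inv_mult_group)

lemma commutator_mem_normal_left:
  assumes "N \<lhd> G" "g \<in> N" "x \<in> carrier G"
  shows "commutator G g x \<in> N"
proof -
  interpret N: normal N G by fact
  have "g \<in> carrier G" using assms(2) N.subset by blast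
  moreover have "x \<otimes> inv g \<otimes> inv x \<in> N"
    using assms normal_invE(2) by blast
  ultimately show ?thesis
    using assms(2,3) by (simp add: commutator_def m_assoc)
qed

lemma normal_generate_if_conj_mem_generate:
  assumes "C \<subseteq> carrier G"
    and "\<And>c x. c \<in> C \<Longrightarrow> x \<in> carrier G \<Longrightarrow> x \<otimes> c \<otimes> inv x \<in> generate G C"
  shows "generate G C \<lhd> G"
proof (rule normal_invI [OF generate_is_subgroup [OF assms(1)]])
  fix x h assume x: "x \<in> carrier G" and h: "h \<in> generate G C"
  from h show "x \<otimes> h \<otimes> inv x \<in> generate G C"
  proof (induction h rule: generate.induct)
    case one
    show ?case using x by (simp add: generate.one)
  next
    case (incl c)
    show ?case by (rule assms(2) [OF incl x])
  next
    case (inv c)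
    then have "c \<in> carrier G" using assms(1) by blast
    then have "x \<otimes> inv c \<otimes> inv x = inv (x \<otimes> c \<otimes> inv x)"
      using x by (simp add: inv_mult_group m_assoc)
    then show ?case
      using generate_m_inv_closed [OF assms(1) assms(2) [OF inv x]] by (rule ssubst)
  next
    case (eng a b)
    then have "a \<in> carrier G" "b \<in> carrier G"
      using generate_in_carrier [OF assms(1)] by auto
    then have "x \<otimes> (a \<otimes> b) \<otimes> inv x = (x \<otimes> a \<otimes> inv x) \<otimes> (x \<otimes> b \<otimes> inv x)"
      using x by (simp add: m_assoc)
    then show ?case using generate.eng [OF eng.IH] by (rule ssubst)
  qed
qed

lemma normal_generate_commutators_right:
  assumes "g \<in> carrier G"
  shows "generate G (commutator G g ` carrier G) \<lhd> G"
proof (rule normal_generate_if_conj_mem_generate)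
  show C: "commutator G g ` carrier G \<subseteq> carrier G" using assms by auto
  fix c x assume "c \<in> commutator G g ` carrier G" and x: "x \<in> carrier G"
  then obtain y where y: "y \<in> carrier G" "c = commutator G g y" by blast
  let ?K = "generate G (commutator G g ` carrier G)"
  have "inv (commutator G g x) \<in> ?K"
    by (rule generate_m_inv_closed [OF C generate.incl [OF imageI [OF x]]])
  moreover have "commutator G g (x \<otimes> y) \<in> ?K"
    by (rule generate.incl [OF imageI [OF m_closed [OF x y(1)]]])
  ultimately have "inv (commutator G g x) \<otimes> commutator G g (x \<otimes> y) \<in> ?K"
    by (rule generate.eng)
  then show "x \<otimes> c \<otimes> inv x \<in> ?K"
    unfolding y(2) conj_commutator_right [OF assms x y(1)] .
qed

end

definition central_mod :: "('a, 'b) monoid_scheme \<Rightarrow> 'a set \<Rightarrow> 'a set" where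
  "central_mod G K = {y \<in> carrier G. \<forall>z \<in> carrier G. commutator G y z \<in> K}"

context group
begin

lemma central_modI:
  "a \<in> carrier G \<Longrightarrow> (\<And>z. z \<in> carrier G \<Longrightarrow> commutator G a z \<in> K) \<Longrightarrow> a \<in> central_mod G K"
  by (simp add: central_mod_def)

lemma central_modD:
  assumes "a \<in> central_mod G K"
  shows central_mod_carrier: "a \<in> carrier G"
    and central_mod_commutator: "z \<in> carrier G \<Longrightarrow> commutator G a z \<in> K"
  using assms by (simp_all add: central_mod_def)

lemma central_mod_subset_carrier: "central_mod G K \<subseteq> carrier G"
  using central_mod_carrier by blast

lemma normal_central_mod:
  assumes "K \<lhd> G"
  shows "central_mod G K \<lhd> G"
proof -
  interpret K: normal K G by fact
  have conj: "x \<otimes> k \<otimes> inv x \<in> K" if "x \<in> carrier G" "k \<in> K" for x k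
    using that assms normal_invE(2) by blast
  note carr = central_mod_carrier and comm = central_mod_commutator
  have "subgroup (central_mod G K) G"
  proof (rule subgroupI)
    show "central_mod G K \<subseteq> carrier G" by (rule central_mod_subset_carrier)
    have "\<one> \<in> central_mod G K"
      by (rule central_modI) (simp_all add: commutator_def K.one_closed)
    then show "central_mod G K \<noteq> {}" by blast
  next
    fix a assume a: "a \<in> central_mod G K"
    show "inv a \<in> central_mod G K"
    proof (rule central_modI)
      fix z assume z: "z \<in> carrier G"
      show "commutator G (inv a) z \<in> K"
        unfolding commutator_inv_left [OF carr [OF a] z]
        using conj [OF inv_closed [OF carr [OF a]] K.m_inv_closed [OF comm [OF a z]]] carr [OF a]
        by simp
    qed (use carr [OF a] in simp)
  next
    fix a b assume a: "a \<in> central_mod G K" and b: "b \<in> central_mod G K"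
    show "a \<otimes> b \<in> central_mod G K"
    proof (rule central_modI)
      fix z assume z: "z \<in> carrier G"
      show "commutator G (a \<otimes> b) z \<in> K"
        unfolding commutator_mult_left [OF carr [OF a] carr [OF b] z]
        using K.m_closed [OF conj [OF carr [OF a] comm [OF b z]] comm [OF a z]] .
    qed (use carr [OF a] carr [OF b] in simp)
  qed
  then show ?thesis
  proof (rule normal_invI)
    fix x y assume x: "x \<in> carrier G" and y: "y \<in> central_mod G K"
    show "x \<otimes> y \<otimes> inv x \<in> central_mod G K"
    proof (rule central_modI)
      fix z assume z: "z \<in> carrier G"
      show "commutator G (x \<otimes> y \<otimes> inv x) z \<in> K"
        unfolding commutator_conj_left [OF x carr [OF y] z]
        using conj [OF x comm [OF y]] x z by simp
    qed (use x carr [OF y] in simp)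
  qed
qed

lemma derived_central_mod_subset:
  assumes "subgroup K G"
  shows "derived G (central_mod G K) \<subseteq> K"
  unfolding derived_def
proof (rule generate_subgroup_incl [OF _ assms], rule subsetI)
  fix h assume "h \<in> derived_set G (central_mod G K)"
  then obtain a b where "a \<in> central_mod G K" "b \<in> central_mod G K"
    and h: "h = a \<otimes> b \<otimes> inv a \<otimes> inv b"
    by blast
  then have "commutator G a b \<in> K" by (simp add: central_modD)
  then show "h \<in> K" by (simp add: h commutator_def)
qed

lemma solvable_seq_subset:
  assumes "solvable_seq G H" "subgroup K G" "K \<subseteq> H"
  shows "solvable_seq G K"
proof -
  obtain n where "(derived G ^^ n) H = {\<one>}"
    using solvable_imp_trivial_derived_seq [OF assms(1)] by blast
  then have "(derived G ^^ n) K = {\<one>}"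
    using subgroup.one_closed [OF exp_of_derived_is_subgroup [OF assms(2)], of n]
      mono_exp_of_derived [OF assms(3), of n]
    by auto
  then show ?thesis
    using trivial_derived_seq_imp_solvable [OF assms(2)] by blast
qed

lemma solvable_seq_central_mod:
  assumes "K \<lhd> G" "solvable_seq G K"
  shows "solvable_seq G (central_mod G K)"
proof (rule augment_solvable_seq)
  show "subgroup (central_mod G K) G"
    using normal_central_mod [OF assms(1)] by (rule normal_imp_subgroup)
  have "derived G (central_mod G K) \<subseteq> K"
    using assms(1) normal_imp_subgroup derived_central_mod_subset by blast
  then show "solvable_seq G (derived G (central_mod G K))"
    using solvable_seq_subset [OF assms(2) derived_is_subgroup [OF central_mod_subset_carrier]]
    by blast
qed

lemma solvable_subgroup_iff_solvable_seq:
  assumes "subgroup H G"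
  shows "solvable (G\<lparr>carrier := H\<rparr>) \<longleftrightarrow> solvable_seq G H"
proof -
  have incl: "group_hom (G\<lparr>carrier := H\<rparr>) G id"
    using subgroup_imp_group [OF assms] is_group subgroup.mem_carrier [OF assms]
    by (auto simp: group_hom_def group_hom_axioms_def hom_def)
  show ?thesis
    unfolding solvable_def
    using group_hom.solvable_imp_solvable_img [OF incl, of H]
      group_hom.solvable_img_imp_solvable [OF incl, of H]
      group.subgroup_self [OF subgroup_imp_group [OF assms]]
    by auto
qed

lemma solvable_subgroup_generated_iff:
  "solvable (subgroup_generated G S) \<longleftrightarrow> solvable_seq G (generate G (carrier G \<inter> S))"
  unfolding subgroup_generated_def
  by (rule solvable_subgroup_iff_solvable_seq) (auto intro: generate_is_subgroup)

lemma solvable_subgroup_generated_if_subset: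
  assumes "solvable_seq G H" "S \<subseteq> H"
  shows "solvable (subgroup_generated G S)"
proof -
  have "subgroup H G" using assms(1) solvable_imp_subgroup by blast
  then have "generate G (carrier G \<inter> S) \<subseteq> H"
    using assms(2) generate_subgroup_incl [of "carrier G \<inter> S" H] by blast
  moreover have "subgroup (generate G (carrier G \<inter> S)) G"
    by (rule generate_is_subgroup) blast
  ultimately show ?thesis
    unfolding solvable_subgroup_generated_iff using solvable_seq_subset [OF assms(1)] by blast
qed

end

lemma solvable_radicalD:
  assumes "is_solvable_radical G R"
  shows "R \<lhd> G" "solvable (G\<lparr>carrier := R\<rparr>)"
    and "\<And>N. N \<lhd> G \<Longrightarrow> solvable (G\<lparr>carrier := N\<rparr>) \<Longrightarrow> N \<subseteq> R"
  using assms unfolding is_solvable_radical_def by auto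

context group
begin

lemma solvable_subgroup_generated_commutators_of_radical:
  assumes "is_solvable_radical G R" "g \<in> R" "S \<subseteq> carrier G"
  shows "solvable (subgroup_generated G (commutator G g ` S))"
proof (rule solvable_subgroup_generated_if_subset)
  have R: "R \<lhd> G" "solvable (G\<lparr>carrier := R\<rparr>)"
    using solvable_radicalD [OF assms(1)] by auto
  then show "solvable_seq G R"
    using solvable_subgroup_iff_solvable_seq normal_imp_subgroup by blast
  show "commutator G g ` S \<subseteq> R"
    using commutator_mem_normal_left [OF R(1) assms(2)] assms(3) by blast
qed

lemma mem_radical_if_solvable_commutators:
  assumes "is_solvable_radical G R" "g \<in> carrier G"
    and "solvable (subgroup_generated G (commutator G g ` carrier G))"
  shows "g \<in> R"
proof -
  define K where "K = generate G (commutator G g ` carrier G)"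
  have K: "K \<lhd> G"
    unfolding K_def using normal_generate_commutators_right [OF assms(2)] .
  have "solvable_seq G K"
    using assms(3) unfolding K_def solvable_subgroup_generated_iff
    by (simp add: Int_absorb1 image_subsetI assms(2))
  then have "solvable_seq G (central_mod G K)"
    using solvable_seq_central_mod [OF K] by blast
  then have "central_mod G K \<subseteq> R"
    using solvable_radicalD(3) [OF assms(1) normal_central_mod [OF K]]
      solvable_subgroup_iff_solvable_seq normal_imp_subgroup [OF normal_central_mod [OF K]]
    by blast
  moreover have "g \<in> central_mod G K"
    using assms(2) by (auto simp: central_mod_def K_def intro: generate.incl)
  ultimately show ?thesis by blast
qed

end

lemma finite_imp_image_atLeastAtMost_1:
  assumes "finite A" "A \<noteq> {}"
  obtains n :: nat and x where "n \<ge> 1" "x ` {1..n} = A"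
proof -
  obtain x where "bij_betw x {1..card A} A"
    using ex_bij_betw_nat_finite_1 [OF assms(1)] by blast
  moreover have "card A \<ge> 1"
    using assms by (simp add: Suc_le_eq card_gt_0_iff)
  ultimately show thesis
    using that bij_betw_imp_surj_on by blast
qed

theorem corollary1p13:
  fixes G :: "('a, 'b) monoid_scheme" and R :: "'a set" and g :: 'a
  assumes "group G" and "finite (carrier G)"
    and "is_solvable_radical G R"
    and "g \<in> carrier G"
  shows "g \<notin> R \<longleftrightarrow>
    (\<exists>n::nat. n \<ge> 1 \<and> (\<exists>x. (\<forall>i\<in>{1..n}. x i \<in> carrier G) \<and>
       \<not> solvable (subgroup_generated G {commutator G g (x i) | i. i \<in> {1..n}})))"
proof -
  interpret group G by fact
  have commutators: "{commutator G g (x i) | i. i \<in> {1..n}} = commutator G g ` x ` {1..n}"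
    for n :: nat and x :: "nat \<Rightarrow> 'a"
    by blast
  have "g \<notin> R \<longleftrightarrow> (\<exists>n::nat. n \<ge> 1 \<and> (\<exists>x. (\<forall>i\<in>{1..n}. x i \<in> carrier G) \<and>
      \<not> solvable (subgroup_generated G (commutator G g ` x ` {1..n}))))"
  proof
    assume "g \<notin> R"
    obtain n :: nat and x :: "nat \<Rightarrow> 'a" where "n \<ge> 1" and x: "x ` {1..n} = carrier G"
      using finite_imp_image_atLeastAtMost_1 [OF assms(2) carrier_not_empty] .
    moreover have "\<not> solvable (subgroup_generated G (commutator G g ` x ` {1..n}))"
      unfolding x using \<open>g \<notin> R\<close> mem_radical_if_solvable_commutators [OF assms(3,4)]
      by (rule contrapos_nn)
    ultimately show "\<exists>n::nat. n \<ge> 1 \<and> (\<exists>x. (\<forall>i\<in>{1..n}. x i \<in> carrier G) \<and>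
        \<not> solvable (subgroup_generated G (commutator G g ` x ` {1..n})))"
      by blast
  next
    assume "\<exists>n::nat. n \<ge> 1 \<and> (\<exists>x. (\<forall>i\<in>{1..n}. x i \<in> carrier G) \<and>
        \<not> solvable (subgroup_generated G (commutator G g ` x ` {1..n})))"
    then show "g \<notin> R"
      using solvable_subgroup_generated_commutators_of_radical [OF assms(3)] by blast
  qed
  then show ?thesis
    unfolding commutators .
qed

end
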